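(* Let $X$ be an absolutely continuous real random variable, symmetric and unimodal about $0$, whose cdf $F_X$ is $C^1$ with density $g=F_X'$, and let $\beta\in(0,1]$. Assume that $g(t+\lambda_t^\beta)g(t-\lambda_t^\beta)>0$ and $$g(t)\ge2\frac{g(t+\lambda_t^\beta)\,g(t-\lambda_t^\beta)}{g(t+\lambda_t^\beta)+g(t-\lambda_t^\beta)}\quad\text{for all }t\in\mathbb{R}.$$ Then $t\mapsto LD_S^\beta(t,F_X)$ is non-increasing on $t>0$ and non-decreasing on $t<0$.
   Context: $\lambda_t^\beta=\inf\{\lambda>0: F_X(t+\lambda)-F_X(t-\lambda)\ge\beta\}$ and $LD_S^\beta(t,F_X)=\frac{2}{\beta^2}\big(F_X(t+\lambda_t^\beta)-F_X(t)\big)\big(F_X(t)-F_X(t-\lambda_t^\beta)\big)$. Symmetric and unimodal about $0$ means $g(-s)=g(s)$ and $g$ is nonincreasing on $[0,\infty)$. *)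

theory Defs
  imports "HOL-Probability.Probability"
begin

definition lam :: "(real \<Rightarrow> real) \<Rightarrow> real \<Rightarrow> real \<Rightarrow> real" where
  "lam F \<beta> t = Inf {l. l > 0 \<and> F (t + l) - F (t - l) \<ge> \<beta>}"

definition LD_S :: "real \<Rightarrow> real \<Rightarrow> (real \<Rightarrow> real) \<Rightarrow> real" where
  "LD_S \<beta> t F = 2 / \<beta>^2 * (F (t + lam F \<beta> t) - F t) * (F t - F (t - lam F \<beta> t))"

end

theory Submission
  imports Defs
begin

(*
  Since F is strictly increasing, lambda_t is the unique solution of F(t + l) - F(t - l) = beta,
  so the masses A = F(t + lambda_t) - F(t) and B = F(t) - F(t - lambda_t) add up to beta and
  LD(t) = 2AB/beta^2 = (beta^2 - D(t)^2)/(2 beta^2) with D = A - B. Implicit differentiation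
  gives lambda' = (g_- - g_+)/(g_+ + g_-), where g_+- = g(t +- lambda_t), hence
  D' = 4 g_+ g_-/(g_+ + g_-) - 2 g(t), which is nonpositive by the harmonic-mean hypothesis.
  By symmetry D(0) = 0, so |D| increases away from the origin and LD decreases.
*)

lemma DERIV_implicit_half_width:
  fixes F L :: "real \<Rightarrow> real"
  assumes deriv_plus: "(F has_real_derivative ga) (at (t + L t))"
    and deriv_minus: "(F has_real_derivative gb) (at (t - L t))"
    and L_cont: "isCont L t"
    and level: "\<And>y. F (y + L y) - F (y - L y) = F (t + L t) - F (t - L t)"
    and nonzero: "ga + gb \<noteq> 0"
  shows "(L has_real_derivative (gb - ga) / (ga + gb)) (at t)"
proof -
  obtain c1 where c1: "\<And>z. F z - F (t + L t) = c1 z * (z - (t + L t))"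
      "isCont c1 (t + L t)" "c1 (t + L t) = ga"
    using deriv_plus unfolding CARAT_DERIV by blast
  obtain c2 where c2: "\<And>z. F z - F (t - L t) = c2 z * (z - (t - L t))"
      "isCont c2 (t - L t)" "c2 (t - L t) = gb"
    using deriv_minus unfolding CARAT_DERIV by blast
  define p where "p y = c1 (y + L y)" for y
  define q where "q y = c2 (y - L y)" for y
  have p_cont: "isCont p t"
    unfolding p_def
    by (rule isCont_o2[where f="\<lambda>y. y + L y" and g=c1, OF _ c1(2)]) (intro continuous_intros L_cont)
  have q_cont: "isCont q t"
    unfolding q_def
    by (rule isCont_o2[where f="\<lambda>y. y - L y" and g=c2, OF _ c2(2)]) (intro continuous_intros L_cont)
  have pq_t: "p t = ga" "q t = gb"
    using c1(3) c2(3) by (simp_all add: p_def q_def)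
  \<comment> \<open>Difference quotients of F at the two endpoints, subtracted, linearise the level condition.\<close>
  have secant: "(L y - L t) * (p y + q y) = (y - t) * (q y - p y)" for y
  proof -
    have "p y * ((y - t) + (L y - L t)) = q y * ((y - t) - (L y - L t))"
      using c1(1)[of "y + L y"] c2(1)[of "y - L y"] level[of y]
      by (simp add: p_def q_def algebra_simps)
    then show ?thesis by (simp add: algebra_simps)
  qed
  have "((\<lambda>y. p y + q y) \<longlongrightarrow> ga + gb) (at t)"
    using isCont_add[OF p_cont q_cont] pq_t by (simp add: isCont_def)
  then have "\<forall>\<^sub>F y in at t. p y + q y \<noteq> 0"
    using nonzero tendsto_imp_eventually_ne by blast
  then have quotient: "\<forall>\<^sub>F y in at t. (q y - p y) / (p y + q y) = (L y - L t) / (y - t)"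
  proof (rule eventually_mono[OF eventually_conj[OF _ eventually_neq_at_within]])
    fix y assume "p y + q y \<noteq> 0 \<and> y \<noteq> t"
    then show "(q y - p y) / (p y + q y) = (L y - L t) / (y - t)"
      using secant[of y] by (simp add: field_simps)
  qed
  have "((\<lambda>y. (q y - p y) / (p y + q y)) \<longlongrightarrow> (gb - ga) / (ga + gb)) (at t)"
    using isCont_divide[OF isCont_diff[OF q_cont p_cont] isCont_add[OF p_cont q_cont]] pq_t nonzero
    by (simp add: isCont_def)
  then have "((\<lambda>y. (L y - L t) / (y - t)) \<longlongrightarrow> (gb - ga) / (ga + gb)) (at t)"
    by (rule Lim_transform_eventually) (rule quotient)
  then show ?thesis
    unfolding has_field_derivative_iff .
qed

lemma lam_nonneg:
  assumes "\<exists>l>0. \<beta> \<le> F (t + l) - F (t - l)"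
  shows "0 \<le> lam F \<beta> t"
  using assms unfolding lam_def by (intro cInf_greatest) auto

lemma symmetric_unimodal_pos:
  fixes g :: "real \<Rightarrow> real"
  assumes symm: "\<And>s. g (- s) = g s"
    and unimodal: "\<And>s u. 0 \<le> s \<Longrightarrow> s \<le> u \<Longrightarrow> g u \<le> g s"
    and far_pos: "\<And>s. 0 \<le> s \<Longrightarrow> \<exists>u\<ge>s. 0 < g u"
  shows "0 < g x"
proof -
  obtain u where "\<bar>x\<bar> \<le> u" "0 < g u" using far_pos[of "\<bar>x\<bar>"] by auto
  then have "0 < g \<bar>x\<bar>" using unimodal[of "\<bar>x\<bar>" u] by simp
  then show ?thesis using symm[of x] by (cases "0 \<le> x") auto
qed

locale mass_window =
  fixes F g :: "real \<Rightarrow> real" and \<beta> :: real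
  assumes F_deriv: "\<And>x. (F has_real_derivative g x) (at x)"
    and density_pos: "\<And>x. 0 < g x"
    and beta_pos: "0 < \<beta>"
    and window_exists: "\<And>t. \<exists>l>0. \<beta> \<le> F (t + l) - F (t - l)"
begin

definition mass :: "real \<Rightarrow> real \<Rightarrow> real" where
  "mass t l = F (t + l) - F (t - l)"

lemma isCont_F: "isCont F x"
  using F_deriv DERIV_isCont by blast

lemma F_strict_mono: "x < y \<Longrightarrow> F x < F y"
  using DERIV_pos_imp_increasing F_deriv density_pos by blast

lemma mass_less_iff: "mass t l1 < mass t l2 \<longleftrightarrow> l1 < l2"
proof
  show "l1 < l2 \<Longrightarrow> mass t l1 < mass t l2"
    using F_strict_mono[of "t + l1" "t + l2"] F_strict_mono[of "t - l2" "t - l1"]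
    by (simp add: mass_def)
  show "mass t l1 < mass t l2 \<Longrightarrow> l1 < l2"
    using F_strict_mono[of "t + l2" "t + l1"] F_strict_mono[of "t - l1" "t - l2"]
    by (cases l1 l2 rule: linorder_cases) (auto simp: mass_def)
qed

lemma isCont_mass: "isCont (\<lambda>t. mass t l) t0" "isCont (mass t) l0"
  unfolding mass_def by (auto intro!: continuous_intros isCont_o2[OF _ isCont_F])

lemma lam_pos: "0 < lam F \<beta> t" and mass_lam: "mass t (lam F \<beta> t) = \<beta>"
proof -
  obtain l where l: "0 < l" "\<beta> \<le> mass t l"
    using window_exists[of t] by (auto simp: mass_def)
  have "mass t 0 \<le> \<beta>" "\<forall>x. 0 \<le> x \<and> x \<le> l \<longrightarrow> isCont (mass t) x"
    using beta_pos isCont_mass by (auto simp: mass_def)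
  then obtain l0 where l0: "0 \<le> l0" "mass t l0 = \<beta>"
    using IVT[of "mass t" 0 \<beta> l] l by auto
  have "l0 \<noteq> 0" using l0 beta_pos by (auto simp: mass_def)
  with l0 have "0 < l0" by simp
  have "lam F \<beta> t = l0"
    unfolding lam_def
  proof (rule cInf_eq_minimum)
    show "l0 \<in> {l. 0 < l \<and> \<beta> \<le> F (t + l) - F (t - l)}"
      using \<open>0 < l0\<close> l0 by (simp add: mass_def)
  next
    fix x assume "x \<in> {l. 0 < l \<and> \<beta> \<le> F (t + l) - F (t - l)}"
    then have "\<not> mass t x < mass t l0" using l0 by (simp add: mass_def)
    then show "l0 \<le> x" using mass_less_iff by (meson not_le)
  qed
  then show "0 < lam F \<beta> t" "mass t (lam F \<beta> t) = \<beta>"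
    using \<open>0 < l0\<close> l0 by simp_all
qed

lemma isCont_lam: "isCont (lam F \<beta>) t0"
  unfolding isCont_def
proof (rule order_tendstoI)
  fix a assume "a < lam F \<beta> t0"
  show "\<forall>\<^sub>F t in at t0. a < lam F \<beta> t"
  proof (cases "a \<le> 0")
    case True
    then show ?thesis using lam_pos by (intro always_eventually) (meson le_less_trans)
  next
    case False
    have "mass t0 a < \<beta>"
      using \<open>a < lam F \<beta> t0\<close> mass_less_iff mass_lam by metis
    then have "\<forall>\<^sub>F t in at t0. mass t a < \<beta>"
      using isCont_mass(1)[of t0 a] by (simp add: isCont_def order_tendstoD(2))
    then show ?thesis
      by (rule eventually_mono) (metis mass_less_iff mass_lam)
  qed
next
  fix a assume "lam F \<beta> t0 < a"
  then have "\<beta> < mass t0 a"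
    using mass_less_iff mass_lam by metis
  then have "\<forall>\<^sub>F t in at t0. \<beta> < mass t a"
    using isCont_mass(1)[of t0 a] by (simp add: isCont_def order_tendstoD(1))
  then show "\<forall>\<^sub>F t in at t0. lam F \<beta> t < a"
    by (rule eventually_mono) (metis mass_less_iff mass_lam)
qed

lemma lam_has_derivative:
  "(lam F \<beta> has_real_derivative
      (g (t - lam F \<beta> t) - g (t + lam F \<beta> t)) / (g (t + lam F \<beta> t) + g (t - lam F \<beta> t))) (at t)"
proof (rule DERIV_implicit_half_width[OF F_deriv F_deriv isCont_lam])
  show "F (y + lam F \<beta> y) - F (y - lam F \<beta> y) = F (t + lam F \<beta> t) - F (t - lam F \<beta> t)" for y
    using mass_lam[of y] mass_lam[of t] by (simp add: mass_def)
  show "g (t + lam F \<beta> t) + g (t - lam F \<beta> t) \<noteq> 0"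
    using density_pos[of "t + lam F \<beta> t"] density_pos[of "t - lam F \<beta> t"] by simp
qed

definition imbalance :: "real \<Rightarrow> real" where
  "imbalance t = (F (t + lam F \<beta> t) - F t) - (F t - F (t - lam F \<beta> t))"

lemma imbalance_has_derivative:
  fixes t :: real
  defines "gp \<equiv> g (t + lam F \<beta> t)" and "gm \<equiv> g (t - lam F \<beta> t)"
  shows "(imbalance has_real_derivative 4 * gp * gm / (gp + gm) - 2 * g t) (at t)"
proof -
  define lam' where "lam' = (gm - gp) / (gp + gm)"
  have sum_pos: "0 < gp + gm"
    unfolding gp_def gm_def using density_pos by (simp add: add_pos_pos)
  have "(imbalance has_real_derivative gp * (1 + lam') + gm * (1 - lam') - 2 * g t) (at t)"
  proof -
    have "((\<lambda>t. F (t + lam F \<beta> t)) has_real_derivative gp * (1 + lam')) (at t)"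
      unfolding gp_def gm_def lam'_def
      by (rule DERIV_chain2[OF F_deriv]) (rule DERIV_add[OF DERIV_ident lam_has_derivative])
    moreover have "((\<lambda>t. F (t - lam F \<beta> t)) has_real_derivative gm * (1 - lam')) (at t)"
      unfolding gp_def gm_def lam'_def
      by (rule DERIV_chain2[OF F_deriv]) (rule DERIV_diff[OF DERIV_ident lam_has_derivative])
    ultimately show ?thesis
      unfolding imbalance_def using F_deriv[of t]
      by (auto intro!: derivative_eq_intros)
  qed
  moreover have "gp * (1 + lam') + gm * (1 - lam') = 4 * gp * gm / (gp + gm)"
  proof -
    have "1 + lam' = 2 * gm / (gp + gm)" "1 - lam' = 2 * gp / (gp + gm)"
      using sum_pos by (simp_all add: lam'_def field_simps)
    then have "gp * (1 + lam') + gm * (1 - lam') = (gp * (2 * gm) + gm * (2 * gp)) / (gp + gm)"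
      by (simp add: add_divide_distrib)
    then show ?thesis by (simp add: algebra_simps)
  qed
  ultimately show ?thesis by simp
qed

lemma imbalance_antimono:
  assumes harmonic: "\<And>t. 2 * (g (t + lam F \<beta> t) * g (t - lam F \<beta> t))
                        / (g (t + lam F \<beta> t) + g (t - lam F \<beta> t)) \<le> g t"
    and "x \<le> y"
  shows "imbalance y \<le> imbalance x"
proof (rule DERIV_nonpos_imp_nonincreasing[OF \<open>x \<le> y\<close>])
  fix t
  show "\<exists>y. (imbalance has_real_derivative y) (at t) \<and> y \<le> 0"
    using imbalance_has_derivative[of t] harmonic[of t] by auto
qed

lemma imbalance_zero:
  assumes symm: "\<And>s. g (- s) = g s"
  shows "imbalance 0 = 0"
proof -
  have "((\<lambda>x. F x + F (- x)) has_real_derivative g x + g (- x) * - 1) (at x)" for x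
    by (rule DERIV_add[OF F_deriv DERIV_chain2[OF F_deriv DERIV_minus[OF DERIV_ident]]])
  moreover have "g x + g (- x) * - 1 = 0" for x
    using symm[of x] by simp
  ultimately have "((\<lambda>x. F x + F (- x)) has_real_derivative 0) (at x)" for x
    by metis
  then have "F (lam F \<beta> 0) + F (- lam F \<beta> 0) = 2 * F 0"
    using DERIV_isconst_all[of "\<lambda>x. F x + F (- x)" "lam F \<beta> 0" 0] by simp
  then show ?thesis by (simp add: imbalance_def)
qed

lemma LD_S_eq_imbalance: "LD_S \<beta> t F = (\<beta>\<^sup>2 - (imbalance t)\<^sup>2) / (2 * \<beta>\<^sup>2)"
proof -
  define A B where "A = F (t + lam F \<beta> t) - F t" and "B = F t - F (t - lam F \<beta> t)"
  have "\<beta> = A + B"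
    using mass_lam[of t] by (simp add: A_def B_def mass_def)
  then have "\<beta>\<^sup>2 - (A - B)\<^sup>2 = 4 * A * B"
    by (simp add: power2_eq_square algebra_simps)
  then have "(\<beta>\<^sup>2 - (A - B)\<^sup>2) / (2 * \<beta>\<^sup>2) = 4 * A * B / (2 * \<beta>\<^sup>2)"
    by simp
  also have "\<dots> = 2 / \<beta>\<^sup>2 * A * B"
    using beta_pos by (simp add: field_simps)
  finally show ?thesis
    unfolding LD_S_def imbalance_def A_def[symmetric] B_def[symmetric] by (rule sym)
qed

lemma LD_S_le_iff: "LD_S \<beta> t F \<le> LD_S \<beta> s F \<longleftrightarrow> (imbalance s)\<^sup>2 \<le> (imbalance t)\<^sup>2"
  using beta_pos by (simp add: LD_S_eq_imbalance divide_right_mono_neg field_simps)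

theorem LD_S_unimodal:
  assumes symm: "\<And>s. g (- s) = g s"
    and harmonic: "\<And>t. 2 * (g (t + lam F \<beta> t) * g (t - lam F \<beta> t))
                        / (g (t + lam F \<beta> t) + g (t - lam F \<beta> t)) \<le> g t"
  shows "0 < s \<Longrightarrow> s \<le> t \<Longrightarrow> LD_S \<beta> t F \<le> LD_S \<beta> s F"
    and "s \<le> t \<Longrightarrow> t < 0 \<Longrightarrow> LD_S \<beta> s F \<le> LD_S \<beta> t F"
proof -
  note antimono = imbalance_antimono[OF harmonic] and zero = imbalance_zero[OF symm]
  show "LD_S \<beta> t F \<le> LD_S \<beta> s F" if "0 < s" "s \<le> t"
    using antimono[of s t] antimono[of 0 s] zero that
    by (simp add: LD_S_le_iff abs_le_square_iff[symmetric])
  show "LD_S \<beta> s F \<le> LD_S \<beta> t F" if "s \<le> t" "t < 0"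
    using antimono[of s t] antimono[of t 0] zero that
    by (simp add: LD_S_le_iff abs_le_square_iff[symmetric])
qed

end

theorem mainTheorem11:
  fixes M :: "'a measure" and X :: "'a \<Rightarrow> real" and g :: "real \<Rightarrow> real" and \<beta> :: real
  assumes "prob_space M"
    and "X \<in> borel_measurable M"
    and deriv: "\<And>x. (cdf (distr M borel X) has_real_derivative g x) (at x)"
    and cont: "continuous_on UNIV g"
    and symm: "\<And>s. g (- s) = g s"
    and unimodal: "\<And>s u. 0 \<le> s \<Longrightarrow> s \<le> u \<Longrightarrow> g u \<le> g s"
    and beta: "0 < \<beta>" "\<beta> \<le> 1"
    and finite_lam: "\<And>t. \<exists>l>0. cdf (distr M borel X) (t + l) - cdf (distr M borel X) (t - l) \<ge> \<beta>"
    and pos: "\<And>t. g (t + lam (cdf (distr M borel X)) \<beta> t) * g (t - lam (cdf (distr M borel X)) \<beta> t) > 0"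
    and harm: "\<And>t. g t \<ge> 2 * (g (t + lam (cdf (distr M borel X)) \<beta> t) * g (t - lam (cdf (distr M borel X)) \<beta> t))
                    / (g (t + lam (cdf (distr M borel X)) \<beta> t) + g (t - lam (cdf (distr M borel X)) \<beta> t))"
  shows "(\<forall>s t. 0 < s \<and> s \<le> t \<longrightarrow> LD_S \<beta> t (cdf (distr M borel X)) \<le> LD_S \<beta> s (cdf (distr M borel X)))
       \<and> (\<forall>s t. s \<le> t \<and> t < 0 \<longrightarrow> LD_S \<beta> s (cdf (distr M borel X)) \<le> LD_S \<beta> t (cdf (distr M borel X)))"
proof -
  let ?F = "cdf (distr M borel X)"
  have "mono ?F"
    using assms(1,2) real_distribution.finite_borel_measure_M
      finite_borel_measure.cdf_nondecreasing prob_space.real_distribution_distr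
    by (metis monoI)
  then have nonneg: "0 \<le> g x" for x
    using mono_on_imp_deriv_nonneg[of UNIV ?F, OF _ deriv] by simp
  have "0 < g x" for x
  proof (rule symmetric_unimodal_pos[where g=g, OF symm unimodal])
    fix s :: real assume "0 \<le> s"
    have "g (s + lam ?F \<beta> s) \<noteq> 0"
      using pos[of s] by auto
    moreover have "s \<le> s + lam ?F \<beta> s"
      using lam_nonneg[OF finite_lam[of s]] by simp
    ultimately show "\<exists>u\<ge>s. 0 < g u"
      using nonneg[of "s + lam ?F \<beta> s"] by (auto intro!: exI[of _ "s + lam ?F \<beta> s"])
  qed
  then interpret mass_window ?F g \<beta>
    using deriv beta(1) finite_lam by unfold_locales auto
  show ?thesis
    using LD_S_unimodal[OF symm harm] by blast
qed

end
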